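(* For each $h\in\{1,2\}$, let $\mathrm{bd}_h\in\mathbb{BD}_n$ be a non-empty rational BD shape represented by the closed graph $G_h=(\mathcal{N},w_h)$, and let $R_h$ be a subgraph of $G_h$ such that $\mathrm{closure}(R_h)=G_h$. Let $G_1\sqcup G_2=(\mathcal{N},w)$. Then $\mathrm{bd}_1\uplus\mathrm{bd}_2\neq\mathrm{bd}_1\cup\mathrm{bd}_2$ if and only if there exist an arc $(i,j)$ of $R_1$ and an arc $(k,\ell)$ of $R_2$ such that (1) $w_1(i,j)<w_2(i,j)$ and $w_2(k,\ell)<w_1(k,\ell)$; and (2) $w_1(i,j)+w_2(k,\ell)<w(i,\ell)+w(k,j)$.
   Context: Let $\mathbb{Q}_\infty=\mathbb{Q}\cup\{+\infty\}$ with $d<+\infty$ and $d+(+\infty)=+\infty$ for all $d$. Let $\mathcal{N}=\{0,1,\dots,n\}$. A graph is a pair $(\mathcal{N},w)$ with $w:\mathcal{N}\times\mathcal{N}\to\mathbb{Q}_\infty$; $(i,j)$ is an arc if $w(i,j)<+\infty$. A path $n_0\cdots n_p$ has weight $\sum_{t=1}^p w(n_{t-1},n_t)$; the graph is consistent if it has no cycle of negative weight. Graphs are ordered by $G\unlhd G'$ iff $w(i,j)\le w'(i,j)$ for all $i,j$. A consistent graph is closed if $w(i,i)=0$ for all $i$ and $w(i,j)\le w(i,k)+w(k,j)$ for all $i,j,k$. The closure $\mathrm{closure}(G)$ of a consistent graph $G$ is the least upper bound (pointwise maximum) of all closed graphs $G^c\unlhd G$. $R=(\mathcal{N},w_R)$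 is a subgraph of $G=(\mathcal{N},w_G)$ if every arc of $R$ is an arc of $G$ with the same weight. A BD (bounded difference) shape is a subset of $\mathbb{R}^n$ defined by finitely many constraints of the forms $\pm x_i\le b$ or $x_i-x_j\le b$ ($i\neq j$, $b\in\mathbb{Q}$); $\mathbb{BD}_n$ is the set of them. A consistent graph $G=(\mathcal{N},w)$ represents the BD shape $\{\mathbf{x}\in\mathbb{R}^n : x_i-x_j\le w(i,j)\ \forall i,j\in\mathcal{N}\}$ where $x_0:=0$ (arc $(i,j)$ encodes $x_i-x_j\le w(i,j)$, $(i,0)$ encodes $x_i\le w(i,0)$, $(0,j)$ encodes $-x_j\le w(0,j)$). $G_1\sqcup G_2=(\mathcal{N},w)$ with $w(i,j)=\max(w_1(i,j),w_2(i,j))$. $\mathrm{bd}_1\uplus\mathrm{bd}_2$ is the least BD shape containing $\mathrm{bd}_1\cup\mathrm{bd}_2$; when $G_1,G_2$ are closed it is represented by $G_1\sqcup G_2$. *)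

theory Defs
  imports Main "HOL.Real"
begin

datatype qinf = Fin rat | PInf

instantiation qinf :: linorder
begin

fun less_eq_qinf :: "qinf \<Rightarrow> qinf \<Rightarrow> bool" where
  "less_eq_qinf (Fin a) (Fin b) = (a \<le> b)"
| "less_eq_qinf _ PInf = True"
| "less_eq_qinf PInf (Fin _) = False"

fun less_qinf :: "qinf \<Rightarrow> qinf \<Rightarrow> bool" where
  "less_qinf (Fin a) (Fin b) = (a < b)"
| "less_qinf (Fin _) PInf = True"
| "less_qinf PInf _ = False"

instance
proof
  fix x y z :: qinf
  show "(x < y) = (x \<le> y \<and> \<not> y \<le> x)"
    by (cases x; cases y) auto
  show "x \<le> x" by (cases x) auto
  show "x \<le> y \<Longrightarrow> y \<le> z \<Longrightarrow> x \<le> z"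
    by (cases x; cases y; cases z) auto
  show "x \<le> y \<Longrightarrow> y \<le> x \<Longrightarrow> x = y"
    by (cases x; cases y) auto
  show "x \<le> y \<or> y \<le> x"
    by (cases x; cases y) auto
qed

end

instantiation qinf :: plus
begin
fun plus_qinf :: "qinf \<Rightarrow> qinf \<Rightarrow> qinf" where
  "plus_qinf (Fin a) (Fin b) = Fin (a + b)"
| "plus_qinf _ _ = PInf"
instance ..
end

text \<open>A graph on N = {0,...,n} is a weight function w :: nat => nat => qinf; only
  the values on {0..n} x {0..n} are relevant.  (i,j) is an arc iff w i j < PInf.\<close>

type_synonym graph = "nat \<Rightarrow> nat \<Rightarrow> qinf"

fun path_weight :: "graph \<Rightarrow> nat list \<Rightarrow> qinf" where
  "path_weight w (a # b # rest) = w a b + path_weight w (b # rest)"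
| "path_weight w _ = Fin 0"

definition is_arc :: "nat \<Rightarrow> graph \<Rightarrow> nat \<Rightarrow> nat \<Rightarrow> bool" where
  "is_arc n w i j \<longleftrightarrow> i \<le> n \<and> j \<le> n \<and> w i j < PInf"

definition consistent :: "nat \<Rightarrow> graph \<Rightarrow> bool" where
  "consistent n w \<longleftrightarrow>
     \<not> (\<exists>ns. set ns \<subseteq> {..n} \<and> 2 \<le> length ns \<and> hd ns = last ns
              \<and> path_weight w ns < Fin 0)"

definition graph_le :: "nat \<Rightarrow> graph \<Rightarrow> graph \<Rightarrow> bool" where
  "graph_le n w w' \<longleftrightarrow> (\<forall>i\<le>n. \<forall>j\<le>n. w i j \<le> w' i j)"

definition closed_graph :: "nat \<Rightarrow> graph \<Rightarrow> bool" where
  "closed_graph n w \<longleftrightarrow> consistent n w \<and> (\<forall>i\<le>n. w i i = Fin 0)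
     \<and> (\<forall>i\<le>n. \<forall>j\<le>n. \<forall>k\<le>n. w i j \<le> w i k + w k j)"

definition is_closure :: "nat \<Rightarrow> graph \<Rightarrow> graph \<Rightarrow> bool" where
  "is_closure n G C \<longleftrightarrow> consistent n G
     \<and> (\<forall>Gc. closed_graph n Gc \<and> graph_le n Gc G \<longrightarrow> graph_le n Gc C)
     \<and> (\<forall>U. (\<forall>Gc. closed_graph n Gc \<and> graph_le n Gc G \<longrightarrow> graph_le n Gc U)
             \<longrightarrow> graph_le n C U)"

definition subgraph :: "nat \<Rightarrow> graph \<Rightarrow> graph \<Rightarrow> bool" where
  "subgraph n R G \<longleftrightarrow> (\<forall>i j. is_arc n R i j \<longrightarrow> is_arc n G i j \<and> G i j = R i j)"

definition graph_join :: "graph \<Rightarrow> graph \<Rightarrow> graph" where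
  "graph_join w1 w2 = (\<lambda>i j. max (w1 i j) (w2 i j))"

text \<open>Points of R^n are represented as functions x :: nat => real with x i = 0
  outside {1..n}; in particular x 0 = 0, matching the convention x_0 := 0.\<close>
definition space :: "nat \<Rightarrow> (nat \<Rightarrow> real) set" where
  "space n = {x. \<forall>i. (i = 0 \<or> n < i) \<longrightarrow> x i = 0}"

datatype bd_constraint = Upper nat rat | Lower nat rat | Diff nat nat rat

fun sat :: "(nat \<Rightarrow> real) \<Rightarrow> bd_constraint \<Rightarrow> bool" where
  "sat x (Upper i b) = (x i \<le> of_rat b)"
| "sat x (Lower i b) = (- x i \<le> of_rat b)"
| "sat x (Diff i j b) = (x i - x j \<le> of_rat b)"

fun valid_constraint :: "nat \<Rightarrow> bd_constraint \<Rightarrow> bool" where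
  "valid_constraint n (Upper i b) = (1 \<le> i \<and> i \<le> n)"
| "valid_constraint n (Lower i b) = (1 \<le> i \<and> i \<le> n)"
| "valid_constraint n (Diff i j b) = (1 \<le> i \<and> i \<le> n \<and> 1 \<le> j \<and> j \<le> n \<and> i \<noteq> j)"

definition BD :: "nat \<Rightarrow> (nat \<Rightarrow> real) set set" where
  "BD n = {S. \<exists>C. finite C \<and> (\<forall>c\<in>C. valid_constraint n c)
                 \<and> S = {x \<in> space n. \<forall>c\<in>C. sat x c}}"

definition bd_of :: "nat \<Rightarrow> graph \<Rightarrow> (nat \<Rightarrow> real) set" where
  "bd_of n w = {x \<in> space n. \<forall>i\<le>n. \<forall>j\<le>n. \<forall>b. w i j = Fin b \<longrightarrow> x i - x j \<le> of_rat b}"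

definition represents :: "nat \<Rightarrow> graph \<Rightarrow> (nat \<Rightarrow> real) set \<Rightarrow> bool" where
  "represents n w S \<longleftrightarrow> consistent n w \<and> S = bd_of n w"

definition bd_hull :: "nat \<Rightarrow> (nat \<Rightarrow> real) set \<Rightarrow> (nat \<Rightarrow> real) set \<Rightarrow> (nat \<Rightarrow> real) set" where
  "bd_hull n S1 S2 = (THE S. S \<in> BD n \<and> S1 \<union> S2 \<subseteq> S
                          \<and> (\<forall>T\<in>BD n. S1 \<union> S2 \<subseteq> T \<longrightarrow> S \<subseteq> T))"

end

theory Submission
  imports Defs
begin

text \<open>Closed graphs are tight: for a finite weight \<open>w(i,j)\<close> and any \<open>t \<le> w(i,j)\<close>, adding
  the constraint \<open>t \<le> x\<^sub>i - x\<^sub>j\<close> and closing over the new arc again gives a closed graph,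
  and closed graphs have non-empty shapes. Hence \<open>G\<^sub>1 \<squnion> G\<^sub>2\<close> represents the hull
  \<open>bd\<^sub>1 \<uplus> bd\<^sub>2\<close>, while shortest paths show that \<open>R\<^sub>h\<close> represents the same shape as its
  closure \<open>G\<^sub>h\<close>.

  A point of the hull outside \<open>bd\<^sub>1 \<union> bd\<^sub>2\<close> violates an arc \<open>(i,j)\<close> of \<open>R\<^sub>1\<close> and
  an arc \<open>(k,l)\<close> of \<open>R\<^sub>2\<close>; since it satisfies the hull's bounds on \<open>x\<^sub>i - x\<^sub>l\<close> and
  \<open>x\<^sub>k - x\<^sub>j\<close>, adding up yields (1) and (2). Conversely, given (1) and (2), tighten the hull graph
  by \<open>t\<^sub>1 \<le> x\<^sub>i - x\<^sub>j\<close> and then by \<open>t\<^sub>2 \<le> x\<^sub>k - x\<^sub>l\<close> with \<open>t\<^sub>1 > w\<^sub>1(i,j)\<close>,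
  \<open>t\<^sub>2 > w\<^sub>2(k,l)\<close>; condition (2) is exactly what keeps the second step consistent, and any
  point of the result lies in the hull but in neither shape.\<close>

instance qinf :: linordered_ab_semigroup_add
proof
  fix a b c :: qinf
  show "a + b + c = a + (b + c)" by (cases a; cases b; cases c) auto
  show "a + b = b + a" by (cases a; cases b) auto
  show "a \<le> b \<Longrightarrow> c + a \<le> c + b" by (cases a; cases b; cases c) auto
qed

lemma qinf_PInf_simps [simp]:
  "x + PInf = PInf" "PInf + x = PInf" "x \<le> PInf" "\<not> PInf < x" "\<not> PInf \<le> Fin r" "Fin r < PInf"
  by (cases x; simp)+

lemma qinf_add_Fin_0 [simp]: "Fin 0 + x = x" "x + Fin 0 = x"
  by (cases x; simp)+

lemma qinf_le_add_nonneg: "Fin 0 \<le> c \<Longrightarrow> (a::qinf) \<le> a + c"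
  using add_left_mono[of "Fin 0" c a] by simp

lemma Fin_less_exists_Fin_le: "Fin a < u \<Longrightarrow> \<exists>b>a. Fin b \<le> u"
  by (cases u) (auto intro: exI[of _ "a + 1"])

lemma qinf_interpolate:
  assumes "Fin a < u" "Fin b < v" "Fin (a + b) < w"
  shows "\<exists>s t. a < s \<and> b < t \<and> Fin s \<le> u \<and> Fin t \<le> v \<and> Fin (s + t) \<le> w"
proof -
  obtain a' b' c' where "a < a'" "Fin a' \<le> u" "b < b'" "Fin b' \<le> v" "a + b < c'" "Fin c' \<le> w"
    using assms Fin_less_exists_Fin_le by meson
  moreover define d where "d = (c' - (a + b)) / 2"
  moreover define e where "e = min (a' - a) (min (b' - b) d)"
  ultimately have "0 < e" "e \<le> a' - a" "e \<le> b' - b" "e \<le> d" by (simp_all add: e_def)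
  then have "a + e \<le> a'" "b + e \<le> b'" "a + e + (b + e) \<le> c'" by (simp_all add: d_def field_simps)
  with \<open>0 < e\<close> \<open>a + e \<le> a'\<close> \<open>b + e \<le> b'\<close> show ?thesis
    using \<open>Fin a' \<le> u\<close> \<open>Fin b' \<le> v\<close> \<open>Fin c' \<le> w\<close>
    by (intro exI[of _ "a + e"] exI[of _ "b + e"]) (auto intro: order_trans[rotated])
qed

lemma min_le_add_min:
  fixes m x y u v :: "'a::linordered_ab_semigroup_add"
  assumes "m \<le> x + u" "m \<le> x + v" "m \<le> y + u" "m \<le> y + v"
  shows "m \<le> min x y + min u v"
  using assms by (cases "x \<le> y"; cases "u \<le> v") (auto simp: min_def)

definition le_qinf :: "real \<Rightarrow> qinf \<Rightarrow> bool" where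
  "le_qinf r v \<longleftrightarrow> (\<forall>b. v = Fin b \<longrightarrow> r \<le> of_rat b)"

lemma le_qinf_simps [simp]: "le_qinf r (Fin b) \<longleftrightarrow> r \<le> of_rat b" "le_qinf r PInf"
  unfolding le_qinf_def by simp_all

lemma le_qinf_mono: "le_qinf r u \<Longrightarrow> u \<le> v \<Longrightarrow> le_qinf r v"
  by (cases u; cases v) (auto intro: order_trans simp: of_rat_less_eq)

lemma le_qinf_less: "le_qinf r u \<Longrightarrow> \<not> le_qinf r v \<Longrightarrow> v < u"
  using le_qinf_mono not_le by blast

lemma le_qinf_add: "le_qinf r u \<Longrightarrow> le_qinf s v \<Longrightarrow> le_qinf (r + s) (u + v)"
  by (cases u; cases v) (auto simp: of_rat_add)

lemma bd_of_iff:
  "x \<in> bd_of n w \<longleftrightarrow> x \<in> space n \<and> (\<forall>i\<le>n. \<forall>j\<le>n. le_qinf (x i - x j) (w i j))"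
  unfolding bd_of_def le_qinf_def by auto

lemma bd_ofD: "x \<in> bd_of n w \<Longrightarrow> i \<le> n \<Longrightarrow> j \<le> n \<Longrightarrow> le_qinf (x i - x j) (w i j)"
  unfolding bd_of_iff by blast

lemma bd_of_violated:
  "x \<in> space n \<Longrightarrow> x \<notin> bd_of n w \<Longrightarrow> \<exists>i\<le>n. \<exists>j\<le>n. \<not> le_qinf (x i - x j) (w i j)"
  unfolding bd_of_iff by blast

lemma bd_of_mono: "graph_le n v w \<Longrightarrow> bd_of n v \<subseteq> bd_of n w"
  unfolding graph_le_def by (auto simp: bd_of_iff) (meson le_qinf_mono)

lemma path_weight_append:
  "path_weight w (xs @ v # ys) = path_weight w (xs @ [v]) + path_weight w (v # ys)"
  by (induction xs rule: induct_list012) (simp_all add: add.assoc)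

lemma triangle_le_path_weight:
  assumes diag: "\<forall>i\<le>n. w i i = Fin 0"
    and triangle: "\<forall>i\<le>n. \<forall>j\<le>n. \<forall>k\<le>n. w i j \<le> w i k + w k j"
    and "set ns \<subseteq> {..n}" "ns \<noteq> []"
  shows "w (hd ns) (last ns) \<le> path_weight w ns"
  using assms(3,4)
proof (induction ns rule: induct_list012)
  case (2 a)
  then show ?case using diag by simp
next
  case (3 a b ns)
  have "w a (last (b # ns)) \<le> w a b + w b (last (b # ns))"
    using triangle 3(3) by (simp add: subset_iff)
  also have "\<dots> \<le> w a b + path_weight w (b # ns)"
    using 3 by (intro add_left_mono) simp
  finally show ?case by simp
qed simp

lemma closed_graph_iff:
  "closed_graph n w \<longleftrightarrow>
     (\<forall>i\<le>n. w i i = Fin 0) \<and> (\<forall>i\<le>n. \<forall>j\<le>n. \<forall>k\<le>n. w i j \<le> w i k + w k j)"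
proof -
  have "consistent n w"
    if diag: "\<forall>i\<le>n. w i i = Fin 0"
      and triangle: "\<forall>i\<le>n. \<forall>j\<le>n. \<forall>k\<le>n. w i j \<le> w i k + w k j"
    unfolding consistent_def
  proof clarify
    fix ns assume ns: "set ns \<subseteq> {..n}" "2 \<le> length ns" "hd ns = last ns"
      "path_weight w ns < Fin 0"
    then have "ns \<noteq> []" by auto
    then have "w (hd ns) (last ns) = Fin 0" using diag ns(1,3) by (simp add: subset_iff)
    with triangle_le_path_weight[OF diag triangle ns(1) \<open>ns \<noteq> []\<close>] ns(4) show False by simp
  qed
  then show ?thesis unfolding closed_graph_def by blast
qed

text \<open>Adding the arc \<open>(q,p)\<close> of weight \<open>-t\<close>, i.e. the constraint \<open>t \<le> x\<^sub>p - x\<^sub>q\<close>,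
  to a closed graph and closing again only creates the new paths through that arc.\<close>
definition tighten :: "graph \<Rightarrow> nat \<Rightarrow> nat \<Rightarrow> rat \<Rightarrow> graph" where
  "tighten H p q t = (\<lambda>a b. min (H a b) (H a q + Fin (- t) + H p b))"

lemma tighten_le: "tighten H p q t a b \<le> H a b"
  by (simp add: tighten_def)

lemma bd_of_tighten_subset: "bd_of n (tighten H p q t) \<subseteq> bd_of n H"
  by (rule bd_of_mono) (simp add: graph_le_def tighten_le)

lemma tighten_closed:
  assumes H: "closed_graph n H" and pq: "p \<le> n" "q \<le> n" and t: "Fin t \<le> H p q"
  shows "closed_graph n (tighten H p q t)"
proof -
  have diag: "\<forall>i\<le>n. H i i = Fin 0"
    and triangle: "\<forall>i\<le>n. \<forall>j\<le>n. \<forall>k\<le>n. H i j \<le> H i k + H k j"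
    using H unfolding closed_graph_iff by auto
  have detour_nonneg: "Fin 0 \<le> H a q + Fin (- t) + H p a" if "a \<le> n" for a
  proof -
    have "H p q \<le> H p a + H a q" using triangle pq that by blast
    with t show ?thesis by (cases "H a q"; cases "H p a"; cases "H p q") auto
  qed
  show ?thesis
    unfolding closed_graph_iff
  proof (intro conjI allI impI)
    fix a assume "a \<le> n"
    then show "tighten H p q t a a = Fin 0"
      using diag detour_nonneg by (simp add: tighten_def min_def)
  next
    fix a b c assume abc: "a \<le> n" "b \<le> n" "c \<le> n"
    have "H a q \<le> H a c + H c q" "H p b \<le> H p c + H c b"
      using triangle abc pq by blast+
    then have "H a q + Fin (- t) + H p b \<le> H a c + (H c q + Fin (- t) + H p b)"
      and "H a q + Fin (- t) + H p b \<le> H a q + Fin (- t) + H p c + H c b"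
      by (metis add.assoc add_right_mono add_left_mono)+
    moreover have "H a q + Fin (- t) + H p b
        \<le> H a q + Fin (- t) + H p c + (H c q + Fin (- t) + H p b)"
      using qinf_le_add_nonneg[OF detour_nonneg[OF abc(3)], of "H a q + Fin (- t) + H p b"]
      by (simp add: ac_simps)
    ultimately show "tighten H p q t a b \<le> tighten H p q t a c + tighten H p q t c b"
      unfolding tighten_def using triangle abc
      by (intro min_le_add_min) (auto intro: min.coboundedI1 min.coboundedI2)
  qed
qed

lemma bd_of_tighten_gap:
  assumes "closed_graph n H" "p \<le> n" "q \<le> n" "x \<in> bd_of n (tighten H p q t)"
  shows "of_rat t \<le> x p - x q"
proof -
  have "tighten H p q t q p \<le> Fin (- t)"
    using assms(1-3) unfolding tighten_def closed_graph_iff by (simp add: min.coboundedI2)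
  then have "le_qinf (x q - x p) (Fin (- t))"
    using bd_ofD[OF assms(4,3,2)] le_qinf_mono by blast
  then show ?thesis by (simp add: of_rat_minus)
qed

fun the_fin :: "qinf \<Rightarrow> rat" where
  "the_fin (Fin r) = r"
| "the_fin PInf = 0"

text \<open>The row minima \<open>\<pi> i = min\<^sub>u H i u\<close> are finite (as \<open>H i i = 0\<close>) and form a potential:
  \<open>\<pi> i \<le> H i j + \<pi> j\<close> by the triangle inequality.\<close>
lemma closed_graph_bd_of_nonempty:
  assumes H: "closed_graph n H"
  shows "bd_of n H \<noteq> {}"
proof -
  have diag: "\<forall>i\<le>n. H i i = Fin 0"
    and triangle: "\<forall>i\<le>n. \<forall>j\<le>n. \<forall>k\<le>n. H i j \<le> H i k + H k j"
    using H unfolding closed_graph_iff by auto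
  define \<pi> where "\<pi> i = the_fin (Min (H i ` {..n}))" for i
  have row_min: "Fin (\<pi> i) \<le> H i u" "\<exists>v\<le>n. H i v = Fin (\<pi> i)" if "i \<le> n" "u \<le> n" for i u
  proof -
    have "Min (H i ` {..n}) \<le> H i i" using that by simp
    then have "Min (H i ` {..n}) = Fin (\<pi> i)"
      using diag that unfolding \<pi>_def by (cases "Min (H i ` {..n})") auto
    moreover have "Min (H i ` {..n}) \<in> H i ` {..n}" by (intro Min_in) auto
    moreover have "Min (H i ` {..n}) \<le> H i u" using that by simp
    ultimately show "Fin (\<pi> i) \<le> H i u" "\<exists>v\<le>n. H i v = Fin (\<pi> i)" by auto
  qed
  have potential: "\<pi> i \<le> b + \<pi> j" if ij: "i \<le> n" "j \<le> n" and b: "H i j = Fin b" for i j b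
  proof -
    obtain v where v: "v \<le> n" "H j v = Fin (\<pi> j)" using row_min(2)[OF ij(2,2)] by blast
    have "Fin (\<pi> i) \<le> H i v" using row_min(1)[OF ij(1) v(1)] .
    also have "\<dots> \<le> H i j + H j v" using triangle ij v(1) by blast
    finally show ?thesis using b v(2) by simp
  qed
  define x where "x i = (if i \<le> n then of_rat (\<pi> i - \<pi> 0) else 0 :: real)" for i
  have "x \<in> bd_of n H"
    unfolding bd_of_def space_def
  proof (intro CollectI conjI allI impI)
    fix i assume "i = 0 \<or> n < i"
    then show "x i = 0" by (auto simp: x_def)
  next
    fix i j b assume "i \<le> n" "j \<le> n" "H i j = Fin b"
    then have "\<pi> i - \<pi> 0 - (\<pi> j - \<pi> 0) \<le> b" using potential by fastforce
    then show "x i - x j \<le> of_rat b"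
      using \<open>i \<le> n\<close> \<open>j \<le> n\<close> by (simp add: x_def of_rat_less_eq flip: of_rat_diff)
  qed
  then show ?thesis by blast
qed

lemma closed_graph_tight:
  assumes H: "closed_graph n H" and ab: "a \<le> n" "b \<le> n"
    and bound: "\<forall>y\<in>bd_of n H. y a - y b \<le> of_rat c"
  shows "H a b \<le> Fin c"
proof (rule ccontr)
  assume "\<not> H a b \<le> Fin c"
  then obtain t where t: "c < t" "Fin t \<le> H a b"
    using Fin_less_exists_Fin_le not_le by blast
  obtain y where y: "y \<in> bd_of n (tighten H a b t)"
    using closed_graph_bd_of_nonempty[OF tighten_closed[OF H ab t(2)]] by blast
  then have "y a - y b \<le> of_rat c" using bound bd_of_tighten_subset by blast
  moreover have "of_rat t \<le> y a - y b" using bd_of_tighten_gap[OF H ab y] .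
  moreover have "(of_rat c :: real) < of_rat t" using t(1) by (simp add: of_rat_less)
  ultimately show False by linarith
qed

definition paths :: "nat \<Rightarrow> nat \<Rightarrow> nat \<Rightarrow> nat list set" where
  "paths n a b = {ns. set ns \<subseteq> {..n} \<and> ns \<noteq> [] \<and> hd ns = a \<and> last ns = b}"

lemma paths_concat:
  assumes p: "p \<in> paths n a c" and q: "q \<in> paths n c b"
  shows "butlast p @ q \<in> paths n a b"
    and "path_weight w (butlast p @ q) = path_weight w p + path_weight w q"
proof -
  have p_eq: "butlast p @ [c] = p" and q_eq: "c # tl q = q"
    using p q unfolding paths_def by (auto simp: append_butlast_last_id) (metis list.collapse)
  show "path_weight w (butlast p @ q) = path_weight w p + path_weight w q"
    using path_weight_append[of w "butlast p" c "tl q"] by (simp add: p_eq q_eq)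
  have "hd (butlast p @ q) = a"
    using p q p_eq unfolding paths_def by (cases "butlast p") auto
  then show "butlast p @ q \<in> paths n a b"
    using p q unfolding paths_def by (auto dest: in_set_butlastD)
qed

lemma consistent_cycle_nonneg:
  assumes "consistent n w" "ns \<in> paths n a a"
  shows "Fin 0 \<le> path_weight w ns"
proof (cases "2 \<le> length ns")
  case True
  with assms show ?thesis unfolding consistent_def paths_def by (metis (mono_tags) mem_Collect_eq not_le)
next
  case False
  with assms(2) obtain z where "ns = [z]" unfolding paths_def
    by (cases ns) (auto simp: Suc_le_eq)
  then show ?thesis by simp
qed

text \<open>Removing a cycle does not increase the weight, so every path can be shortened to one with at
  most \<open>n + 1\<close> nodes.\<close>
lemma exists_short_path:
  assumes w: "consistent n w" and ns: "ns \<in> paths n a b"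
  shows "\<exists>ms\<in>paths n a b. length ms \<le> Suc n \<and> path_weight w ms \<le> path_weight w ns"
  using ns
proof (induction "length ns" arbitrary: ns rule: less_induct)
  case less
  show ?case
  proof (cases "length ns \<le> Suc n")
    case False
    have "card (set ns) \<le> card {..n}"
      using less.prems unfolding paths_def by (intro card_mono) auto
    with False have "\<not> distinct ns" using distinct_card by fastforce
    then obtain xs y ys zs where ns: "ns = xs @ [y] @ ys @ [y] @ zs"
      using not_distinct_decomp by blast
    define ms where "ms = xs @ [y] @ zs"
    have ms: "ms \<in> paths n a b"
      using less.prems unfolding paths_def ms_def ns by (cases xs; cases zs) auto
    have "y # ys @ [y] \<in> paths n y y" using less.prems unfolding paths_def ns by auto
    then have "Fin 0 \<le> path_weight w (y # ys @ [y])" by (rule consistent_cycle_nonneg[OF w])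
    then have "path_weight w (y # zs) \<le> path_weight w (y # ys @ [y]) + path_weight w (y # zs)"
      using qinf_le_add_nonneg add.commute by metis
    then have "path_weight w ms \<le> path_weight w ns"
      unfolding ns ms_def
      using path_weight_append[of w xs y "ys @ [y] @ zs"] path_weight_append[of w "y # ys" y zs]
        path_weight_append[of w xs y zs]
      by (simp add: add_left_mono)
    moreover have "length ms < length ns" unfolding ms_def ns by simp
    ultimately show ?thesis using less.hyps ms order_trans by blast
  qed (use less.prems in blast)
qed

definition shortest :: "nat \<Rightarrow> graph \<Rightarrow> graph" where
  "shortest n w a b = Min (insert PInf (path_weight w ` {ns \<in> paths n a b. length ns \<le> Suc n}))"

lemma finite_short_path_weights:
  "finite (insert PInf (path_weight w ` {ns \<in> paths n a b. length ns \<le> Suc n}))"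
proof -
  have "{ns \<in> paths n a b. length ns \<le> Suc n} \<subseteq> {xs. set xs \<subseteq> {..n} \<and> length xs \<le> Suc n}"
    unfolding paths_def by auto
  then show ?thesis using finite_lists_length_le[of "{..n}" "Suc n"] finite_subset by blast
qed

lemma shortest_le_path_weight:
  assumes "consistent n w" "ns \<in> paths n a b"
  shows "shortest n w a b \<le> path_weight w ns"
proof -
  obtain ms where ms: "ms \<in> paths n a b" "length ms \<le> Suc n" "path_weight w ms \<le> path_weight w ns"
    using exists_short_path[OF assms] by blast
  then have "shortest n w a b \<le> path_weight w ms"
    unfolding shortest_def by (intro Min_le finite_short_path_weights) auto
  then show ?thesis using ms(3) by (rule order_trans)
qed

lemma shortest_attained:
  "shortest n w a b = PInf \<or> (\<exists>ns\<in>paths n a b. path_weight w ns = shortest n w a b)"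
  using Min_in[OF finite_short_path_weights[of w n a b]] unfolding shortest_def by auto

lemma shortest_closed:
  assumes w: "consistent n w"
  shows "closed_graph n (shortest n w)"
  unfolding closed_graph_iff
proof (intro conjI allI impI)
  fix i assume "i \<le> n"
  then have "[i] \<in> paths n i i" unfolding paths_def by auto
  then have "shortest n w i i \<le> Fin 0" using shortest_le_path_weight[OF w] by fastforce
  moreover have "Fin 0 \<le> shortest n w i i"
    using shortest_attained[of n w i i] consistent_cycle_nonneg[OF w] by force
  ultimately show "shortest n w i i = Fin 0" by simp
next
  fix a b c assume "a \<le> n" "b \<le> n" "c \<le> n"
  show "shortest n w a b \<le> shortest n w a c + shortest n w c b"
  proof (cases "shortest n w a c = PInf \<or> shortest n w c b = PInf")
    case False
    then obtain p q where p: "p \<in> paths n a c" "path_weight w p = shortest n w a c"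
      and q: "q \<in> paths n c b" "path_weight w q = shortest n w c b"
      using shortest_attained[of n w a c] shortest_attained[of n w c b] by blast
    then have "shortest n w a b \<le> path_weight w (butlast p @ q)"
      using shortest_le_path_weight[OF w paths_concat(1)[OF p(1) q(1)]] by simp
    with p q show ?thesis using paths_concat(2) by simp
  qed auto
qed

lemma shortest_le: "consistent n w \<Longrightarrow> graph_le n (shortest n w) w"
  unfolding graph_le_def
proof (intro allI impI)
  fix i j assume "consistent n w" "i \<le> n" "j \<le> n"
  moreover have "[i, j] \<in> paths n i j" unfolding paths_def using \<open>i \<le> n\<close> \<open>j \<le> n\<close> by auto
  ultimately show "shortest n w i j \<le> w i j" using shortest_le_path_weight by fastforce
qed

lemma bd_of_le_path_weight:
  assumes x: "x \<in> bd_of n w"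
  shows "ns \<in> paths n a b \<Longrightarrow> le_qinf (x a - x b) (path_weight w ns)"
proof (induction ns arbitrary: a rule: induct_list012)
  case (3 c d ns)
  then have "c = a" "a \<le> n" "d \<le> n" "d # ns \<in> paths n d b" by (auto simp: paths_def)
  then have "le_qinf (x a - x d + (x d - x b)) (w a d + path_weight w (d # ns))"
    using 3(2) bd_ofD[OF x] le_qinf_add by blast
  then show ?case using \<open>c = a\<close> by simp
qed (auto simp: paths_def)

lemma bd_of_shortest: "bd_of n w \<subseteq> bd_of n (shortest n w)"
proof
  fix x assume x: "x \<in> bd_of n w"
  have "le_qinf (x i - x j) (shortest n w i j)" for i j
    using shortest_attained[of n w i j] bd_of_le_path_weight[OF x] by force
  with x show "x \<in> bd_of n (shortest n w)" unfolding bd_of_iff by blast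
qed

lemma bd_of_subgraph: "subgraph n R G \<Longrightarrow> bd_of n G \<subseteq> bd_of n R"
  unfolding subgraph_def is_arc_def bd_of_def by (fastforce simp: less_le)

lemma bd_of_closure:
  assumes "subgraph n R G" "is_closure n R G"
  shows "bd_of n R = bd_of n G"
proof
  have R: "consistent n R" using assms(2) unfolding is_closure_def by blast
  have "graph_le n (shortest n R) G"
    using assms(2) shortest_closed[OF R] shortest_le[OF R] unfolding is_closure_def by blast
  then show "bd_of n R \<subseteq> bd_of n G" using bd_of_shortest bd_of_mono by blast
  show "bd_of n G \<subseteq> bd_of n R" using bd_of_subgraph[OF assms(1)] .
qed

text \<open>The constraint \<open>x\<^sub>a - x\<^sub>b \<le> r\<close>, read with the convention \<open>x\<^sub>0 = 0\<close>.\<close>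
definition diff_constraint :: "nat \<Rightarrow> nat \<Rightarrow> rat \<Rightarrow> bd_constraint" where
  "diff_constraint a b r =
     (if b = 0 then Upper a r else if a = 0 then Lower b r else Diff a b r)"

lemma sat_diff_constraint:
  "x 0 = 0 \<Longrightarrow> a \<noteq> b \<Longrightarrow> sat x (diff_constraint a b r) \<longleftrightarrow> x a - x b \<le> of_rat r"
  unfolding diff_constraint_def by auto

lemma valid_diff_constraint:
  "a \<le> n \<Longrightarrow> b \<le> n \<Longrightarrow> a \<noteq> b \<Longrightarrow> valid_constraint n (diff_constraint a b r)"
  unfolding diff_constraint_def by auto

lemma closed_graph_bd_of_BD:
  assumes w: "closed_graph n w"
  shows "bd_of n w \<in> BD n"
proof -
  define A where "A = {(a, b). a \<le> n \<and> b \<le> n \<and> a \<noteq> b \<and> w a b \<noteq> PInf}"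
  define C where "C = (\<lambda>(a, b). diff_constraint a b (the_fin (w a b))) ` A"
  have "A \<subseteq> {..n} \<times> {..n}" unfolding A_def by auto
  then have "finite C" unfolding C_def using finite_subset by blast
  moreover have "\<forall>c\<in>C. valid_constraint n c"
    unfolding C_def A_def using valid_diff_constraint by auto
  moreover have "bd_of n w = {x \<in> space n. \<forall>c\<in>C. sat x c}"
  proof (intro set_eqI iffI)
    fix x assume x: "x \<in> bd_of n w"
    then have "x 0 = 0" unfolding bd_of_def space_def by auto
    have "sat x (diff_constraint a b (the_fin (w a b)))" if "(a, b) \<in> A" for a b
      using that bd_ofD[OF x, of a b] sat_diff_constraint[of x, OF \<open>x 0 = 0\<close>]
      unfolding A_def by (cases "w a b") auto
    with x show "x \<in> {x \<in> space n. \<forall>c\<in>C. sat x c}"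
      unfolding C_def bd_of_def by auto
  next
    fix x assume x: "x \<in> {x \<in> space n. \<forall>c\<in>C. sat x c}"
    then have "x 0 = 0" unfolding space_def by auto
    show "x \<in> bd_of n w"
      unfolding bd_of_def
    proof (intro CollectI conjI allI impI)
      show "x \<in> space n" using x by blast
      fix a b r assume ab: "a \<le> n" "b \<le> n" "w a b = Fin r"
      show "x a - x b \<le> of_rat r"
      proof (cases "a = b")
        case True
        then show ?thesis using w ab unfolding closed_graph_iff by auto
      next
        case False
        then have "sat x (diff_constraint a b r)" using x ab unfolding C_def A_def by force
        then show ?thesis using sat_diff_constraint[of x, OF \<open>x 0 = 0\<close> False] by simp
      qed
    qed
  qed
  ultimately show ?thesis unfolding BD_def by blast
qed

lemma bd_of_join_least:
  assumes G1: "closed_graph n G1" and G2: "closed_graph n G2"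
    and T: "T \<in> BD n" and sub: "bd_of n G1 \<union> bd_of n G2 \<subseteq> T"
  shows "bd_of n (graph_join G1 G2) \<subseteq> T"
proof
  fix x assume x: "x \<in> bd_of n (graph_join G1 G2)"
  obtain C where C: "\<forall>c\<in>C. valid_constraint n c" "T = {x \<in> space n. \<forall>c\<in>C. sat x c}"
    using T unfolding BD_def by blast
  have diff_bound: "x a - x b \<le> of_rat r"
    if "a \<le> n" "b \<le> n" "\<forall>y\<in>T. y a - y b \<le> of_rat r" for a b r
  proof -
    have "G1 a b \<le> Fin r" "G2 a b \<le> Fin r"
      using closed_graph_tight[OF G1 that(1,2)] closed_graph_tight[OF G2 that(1,2)] that(3) sub
      by blast+
    then have "graph_join G1 G2 a b \<le> Fin r" unfolding graph_join_def by simp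
    then have "le_qinf (x a - x b) (Fin r)" using bd_ofD[OF x that(1,2)] le_qinf_mono by blast
    then show ?thesis by simp
  qed
  have x0: "x 0 = 0" and T0: "\<forall>y\<in>T. y 0 = 0" using x C(2) unfolding bd_of_def space_def by auto
  have "sat x c" if c: "c \<in> C" for c
  proof (cases c)
    case (Upper i r)
    then have "i \<le> n" "\<forall>y\<in>T. y i - y 0 \<le> of_rat r" using C c T0 by (auto, force)
    then show ?thesis using diff_bound[of i 0 r] x0 Upper by simp
  next
    case (Lower i r)
    then have "i \<le> n" "\<forall>y\<in>T. y 0 - y i \<le> of_rat r" using C c T0 by (auto, force)
    then show ?thesis using diff_bound[of 0 i r] x0 Lower by simp
  next
    case (Diff i j r)
    then have "i \<le> n" "j \<le> n" "\<forall>y\<in>T. y i - y j \<le> of_rat r" using C c by auto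
    then show ?thesis using diff_bound[of i j r] Diff by simp
  qed
  then show "x \<in> T" using C(2) x unfolding bd_of_def by blast
qed

lemma bd_of_le_join: "bd_of n G1 \<union> bd_of n G2 \<subseteq> bd_of n (graph_join G1 G2)"
  by (intro Un_least bd_of_mono) (auto simp: graph_le_def graph_join_def)

lemma closed_graph_join:
  assumes "closed_graph n G1" "closed_graph n G2"
  shows "closed_graph n (graph_join G1 G2)"
  unfolding closed_graph_iff
proof (intro conjI allI impI)
  fix i assume "i \<le> n"
  then show "graph_join G1 G2 i i = Fin 0"
    using assms unfolding closed_graph_iff graph_join_def by simp
next
  fix a b c assume abc: "a \<le> n" "b \<le> n" "c \<le> n"
  have "G1 a b \<le> G1 a c + G1 c b" "G2 a b \<le> G2 a c + G2 c b"
    using assms abc unfolding closed_graph_iff by blast+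
  moreover have "G1 a c + G1 c b \<le> graph_join G1 G2 a c + graph_join G1 G2 c b"
    "G2 a c + G2 c b \<le> graph_join G1 G2 a c + graph_join G1 G2 c b"
    unfolding graph_join_def by (intro add_mono; simp)+
  ultimately have "max (G1 a b) (G2 a b) \<le> graph_join G1 G2 a c + graph_join G1 G2 c b"
    by (meson max.boundedI order_trans)
  then show "graph_join G1 G2 a b \<le> graph_join G1 G2 a c + graph_join G1 G2 c b"
    by (simp add: graph_join_def)
qed

lemma bd_hull_bd_of:
  assumes "closed_graph n G1" "closed_graph n G2"
  shows "bd_hull n (bd_of n G1) (bd_of n G2) = bd_of n (graph_join G1 G2)"
proof -
  have "bd_of n (graph_join G1 G2) \<in> BD n"
    using closed_graph_bd_of_BD[OF closed_graph_join[OF assms]] .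
  with bd_of_le_join bd_of_join_least[OF assms] show ?thesis
    unfolding bd_hull_def by (intro the_equality) (simp, meson subset_antisym)
qed

lemma violated_arcs_of_join_point:
  assumes R1: "subgraph n R1 G1" and R2: "subgraph n R2 G2"
    and x: "x \<in> bd_of n (graph_join G1 G2)" "x \<notin> bd_of n R1" "x \<notin> bd_of n R2"
  shows "\<exists>i j k l. is_arc n R1 i j \<and> is_arc n R2 k l
    \<and> G1 i j < G2 i j \<and> G2 k l < G1 k l
    \<and> G1 i j + G2 k l < graph_join G1 G2 i l + graph_join G1 G2 k j"
proof -
  let ?J = "graph_join G1 G2"
  have "x \<in> space n" using x(1) unfolding bd_of_def by blast
  obtain i j where ij: "i \<le> n" "j \<le> n" and viol1: "\<not> le_qinf (x i - x j) (R1 i j)"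
    using bd_of_violated[OF \<open>x \<in> space n\<close> x(2)] by blast
  obtain k l where kl: "k \<le> n" "l \<le> n" and viol2: "\<not> le_qinf (x k - x l) (R2 k l)"
    using bd_of_violated[OF \<open>x \<in> space n\<close> x(3)] by blast
  have arc1: "is_arc n R1 i j" and arc2: "is_arc n R2 k l"
    using ij kl viol1 viol2 unfolding is_arc_def by (metis le_qinf_simps(2) less_le qinf_PInf_simps(3))+
  then have G1ij: "G1 i j = R1 i j" and G2kl: "G2 k l = R2 k l"
    using R1 R2 unfolding subgraph_def by blast+
  have "R1 i j < ?J i j" "R2 k l < ?J k l"
    using le_qinf_less bd_ofD[OF x(1)] ij kl viol1 viol2 by blast+
  then have "G1 i j < G2 i j" "G2 k l < G1 k l"
    using G1ij G2kl unfolding graph_join_def by (auto simp: less_max_iff_disj)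
  moreover have "G1 i j + G2 k l < ?J i l + ?J k j"
  proof (rule le_qinf_less)
    show "le_qinf ((x i - x l) + (x k - x j)) (?J i l + ?J k j)"
      using bd_ofD[OF x(1)] ij kl by (blast intro: le_qinf_add)
    have "\<not> le_qinf ((x i - x j) + (x k - x l)) (R1 i j + R2 k l)"
      using viol1 viol2 by (cases "R1 i j"; cases "R2 k l") (auto simp: of_rat_add)
    then show "\<not> le_qinf ((x i - x l) + (x k - x j)) (G1 i j + G2 k l)"
      using G1ij G2kl by (simp add: algebra_simps)
  qed
  ultimately show ?thesis using arc1 arc2 by blast
qed

lemma join_point_outside_union:
  assumes G1: "closed_graph n G1" and G2: "closed_graph n G2"
    and ijkl: "i \<le> n" "j \<le> n" "k \<le> n" "l \<le> n"
    and lt1: "G1 i j < G2 i j" and lt2: "G2 k l < G1 k l"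
    and lt3: "G1 i j + G2 k l < graph_join G1 G2 i l + graph_join G1 G2 k j"
  shows "\<exists>x\<in>bd_of n (graph_join G1 G2). x \<notin> bd_of n G1 \<and> x \<notin> bd_of n G2"
proof -
  let ?J = "graph_join G1 G2"
  obtain r1 r2 where r1: "G1 i j = Fin r1" and r2: "G2 k l = Fin r2"
    using lt1 lt2 by (cases "G1 i j"; cases "G2 k l") auto
  have "Fin r1 < ?J i j" "Fin r2 < ?J k l" "Fin (r1 + r2) < ?J i l + ?J k j"
    using lt1 lt2 lt3 r1 r2 unfolding graph_join_def by (auto simp: less_max_iff_disj)
  then obtain t1 t2 where t: "r1 < t1" "r2 < t2" "Fin t1 \<le> ?J i j" "Fin t2 \<le> ?J k l"
    "Fin (t1 + t2) \<le> ?J i l + ?J k j"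
    using qinf_interpolate by blast
  define K1 where "K1 = tighten ?J i j t1"
  define K2 where "K2 = tighten K1 k l t2"
  have J: "closed_graph n ?J" using closed_graph_join[OF G1 G2] .
  have K1: "closed_graph n K1" unfolding K1_def using tighten_closed[OF J ijkl(1,2) t(3)] .
  have "Fin t2 \<le> ?J k j + Fin (- t1) + ?J i l"
    using t(5) by (cases "?J i l"; cases "?J k j") auto
  then have "Fin t2 \<le> K1 k l" unfolding K1_def tighten_def using t(4) by simp
  then have K2: "closed_graph n K2" unfolding K2_def using tighten_closed[OF K1 ijkl(3,4)] by blast
  obtain x where x: "x \<in> bd_of n K2" using closed_graph_bd_of_nonempty[OF K2] by blast
  then have xK1: "x \<in> bd_of n K1" and xJ: "x \<in> bd_of n ?J"
    using bd_of_tighten_subset unfolding K1_def K2_def by blast+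
  have "of_rat t1 \<le> x i - x j"
    using bd_of_tighten_gap[OF J ijkl(1,2)] xK1 unfolding K1_def by blast
  moreover have "of_rat t2 \<le> x k - x l"
    using bd_of_tighten_gap[OF K1 ijkl(3,4)] x unfolding K2_def by blast
  moreover have "(of_rat r1 :: real) < of_rat t1" "(of_rat r2 :: real) < of_rat t2"
    using t(1,2) by (simp_all add: of_rat_less)
  ultimately have "\<not> le_qinf (x i - x j) (G1 i j)" "\<not> le_qinf (x k - x l) (G2 k l)"
    using r1 r2 by simp_all
  then show ?thesis using xJ bd_ofD ijkl by blast
qed

theorem theorem6:
  fixes n :: nat and bd1 bd2 :: "(nat \<Rightarrow> real) set" and G1 G2 R1 R2 :: graph
  assumes bd1: "bd1 \<in> BD n" "bd1 \<noteq> {}"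
    and bd2: "bd2 \<in> BD n" "bd2 \<noteq> {}"
    and G1: "closed_graph n G1" "represents n G1 bd1"
    and G2: "closed_graph n G2" "represents n G2 bd2"
    and R1: "subgraph n R1 G1" "is_closure n R1 G1"
    and R2: "subgraph n R2 G2" "is_closure n R2 G2"
  shows "bd_hull n bd1 bd2 \<noteq> bd1 \<union> bd2 \<longleftrightarrow>
    (\<exists>i j k l. is_arc n R1 i j \<and> is_arc n R2 k l
       \<and> G1 i j < G2 i j \<and> G2 k l < G1 k l
       \<and> G1 i j + G2 k l < graph_join G1 G2 i l + graph_join G1 G2 k j)"
proof -
  \<comment> \<open>\<open>bd1\<close> and \<open>bd2\<close> are unused: closedness of \<open>G\<^sub>h\<close> already makes \<open>bd\<^sub>h\<close> a non-empty BD shape.\<close>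
  have bd: "bd1 = bd_of n G1" "bd2 = bd_of n G2" "bd1 = bd_of n R1" "bd2 = bd_of n R2"
    using G1(2) G2(2) bd_of_closure[OF R1] bd_of_closure[OF R2] unfolding represents_def by auto
  have hull: "bd_hull n bd1 bd2 = bd_of n (graph_join G1 G2)"
    unfolding bd(1,2) using bd_hull_bd_of[OF G1(1) G2(1)] .
  show ?thesis
  proof
    assume "bd_hull n bd1 bd2 \<noteq> bd1 \<union> bd2"
    then obtain x where "x \<in> bd_of n (graph_join G1 G2)" "x \<notin> bd_of n R1" "x \<notin> bd_of n R2"
      using hull bd bd_of_le_join by blast
    then show "\<exists>i j k l. is_arc n R1 i j \<and> is_arc n R2 k l \<and> G1 i j < G2 i j \<and> G2 k l < G1 k l
       \<and> G1 i j + G2 k l < graph_join G1 G2 i l + graph_join G1 G2 k j"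
      using violated_arcs_of_join_point[OF R1(1) R2(1)] by blast
  next
    assume "\<exists>i j k l. is_arc n R1 i j \<and> is_arc n R2 k l \<and> G1 i j < G2 i j \<and> G2 k l < G1 k l
       \<and> G1 i j + G2 k l < graph_join G1 G2 i l + graph_join G1 G2 k j"
    then show "bd_hull n bd1 bd2 \<noteq> bd1 \<union> bd2"
      using join_point_outside_union[OF G1(1) G2(1)] hull bd(1,2) unfolding is_arc_def by blast
  qed
qed

end
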